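(* Let $G$ be a group, $g\in[G,G]$, let $m\ge 1$, let $g_1,\dots,g_m$ be conjugates of $g$ in $G$, and let $n_1,\dots,n_m$ be integers. Unless $m=1$ and $g_1^{n_1}=1$, we have $$\mathrm{cl}_G(g_1^{n_1}g_2^{n_2}\cdots g_m^{n_m})\ \ge\ \mathrm{scl}_G(g)\left|\sum_{i=1}^m n_i\right|-\frac{m}{2}+1.$$
   Context: For a group $G$, $[G,G]$ is its commutator subgroup. For $h\in[G,G]$, the commutator length $\mathrm{cl}_G(h)$ is the least $n\ge 0$ such that $h=[a_1,b_1]\cdots[a_n,b_n]$ for some $a_i,b_i\in G$. The stable commutator length is $\mathrm{scl}_G(g)=\lim_{n\to\infty}\mathrm{cl}_G(g^n)/n$ for $g\in[G,G]$. Note that a product of conjugates of $g\in[G,G]$ lies in $[G,G]$. *)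

theory Defs
  imports "HOL-Algebra.Algebra" "HOL-Analysis.Analysis"
begin

definition commutator :: "('a, 'b) monoid_scheme \<Rightarrow> 'a \<Rightarrow> 'a \<Rightarrow> 'a" where
  "commutator G a b = a \<otimes>\<^bsub>G\<^esub> b \<otimes>\<^bsub>G\<^esub> inv\<^bsub>G\<^esub> a \<otimes>\<^bsub>G\<^esub> inv\<^bsub>G\<^esub> b"

definition comm_prod :: "('a, 'b) monoid_scheme \<Rightarrow> ('a \<times> 'a) list \<Rightarrow> 'a" where
  "comm_prod G ps = foldr (\<lambda>(a, b) acc. commutator G a b \<otimes>\<^bsub>G\<^esub> acc) ps \<one>\<^bsub>G\<^esub>"

definition cl :: "('a, 'b) monoid_scheme \<Rightarrow> 'a \<Rightarrow> nat" where
  "cl G h = (LEAST n. \<exists>ps. length ps = n \<and> (\<forall>(a, b) \<in> set ps. a \<in> carrier G \<and> b \<in> carrier G)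
                          \<and> h = comm_prod G ps)"

definition scl :: "('a, 'b) monoid_scheme \<Rightarrow> 'a \<Rightarrow> real" where
  "scl G g = lim (\<lambda>n::nat. real (cl G (g [^]\<^bsub>G\<^esub> n)) / real n)"

definition pow_prod :: "('a, 'b) monoid_scheme \<Rightarrow> ('a \<times> int) list \<Rightarrow> 'a" where
  "pow_prod G ps = foldr (\<lambda>(x, k) acc. (x [^]\<^bsub>G\<^esub> k) \<otimes>\<^bsub>G\<^esub> acc) ps \<one>\<^bsub>G\<^esub>"

end

theory Submission
  imports Defs
begin

text \<open>
  Write \<open>h = g_1^n_1 \<cdots> g_m^n_m\<close>, \<open>k = cl h\<close>, \<open>N = n_1 + \<dots> + n_m\<close> and \<open>P = 2q + 1\<close>.
  The \<open>P\<close>-th power of a product of \<open>k \<ge> 1\<close> commutators is a product of \<open>k + q(2k - 1)\<close>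
  commutators. On the other hand, up to \<open>q(m - 1)\<close> commutators, \<open>h^P\<close> is again a product of
  \<open>m\<close> conjugates of powers of \<open>g\<close>, now with exponent sum \<open>PN\<close>, and such a product differs from
  a single conjugate of \<open>g^(PN)\<close> by \<open>m - 1\<close> commutators. Hence
  \<open>cl (g^(PN)) \<le> q(2k + m - 2) + k + m - 1\<close>; if \<open>h = 1\<close> (so \<open>m \<ge> 2\<close>), the same bound with
  \<open>k = 0\<close> holds because one factor is the inverse of the product of the others. As \<open>cl (g^n)\<close>
  is subadditive in \<open>n\<close>, Fekete's lemma gives \<open>scl g \<le> cl (g^n) / n\<close>; dividing by \<open>P \<bar>N\<bar>\<close>
  and letting \<open>q \<rightarrow> \<infinity>\<close> yields \<open>scl g \<cdot> \<bar>N\<bar> \<le> k + m/2 - 1\<close>.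
\<close>

section \<open>Real sequences\<close>

lemma subadditive_le_multiple:
  fixes f :: "nat \<Rightarrow> real"
  assumes subadd: "\<And>a b. f (a + b) \<le> f a + f b"
  shows "f (q * d + r) \<le> real q * f d + f r"
proof (induction q)
  case 0
  show ?case by simp
next
  case (Suc q)
  have "f (Suc q * d + r) \<le> f d + f (q * d + r)"
    using subadd[of d "q * d + r"] by (simp add: add.assoc)
  with Suc show ?case by (simp add: algebra_simps)
qed

lemma subadditive_quotient_eventually_less:
  fixes f :: "nat \<Rightarrow> real"
  assumes nonneg: "\<And>n. 0 \<le> f n" and subadd: "\<And>a b. f (a + b) \<le> f a + f b"
    and "d \<ge> 1" and "\<epsilon> > 0"
  shows "\<forall>\<^sub>F n in sequentially. f n / real n < f d / real d + \<epsilon>"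
proof -
  define B where "B = Max (f ` {..<d})"
  have B: "f j \<le> B" if "j < d" for j
    unfolding B_def using that by (intro Max_ge) auto
  have "0 \<le> B" using B[of 0] nonneg[of 0] \<open>d \<ge> 1\<close> by linarith
  obtain N :: nat where N: "real N > B / \<epsilon>"
    using reals_Archimedean2 by blast
  show ?thesis
    using eventually_ge_at_top[of "max d (Suc N)"]
  proof eventually_elim
    case (elim n)
    then have "n \<ge> d" and n_pos: "real n > 0" and "real n > B / \<epsilon>"
      using N by auto
    have "real (n div d) * real d \<le> real n"
      by (metis div_times_less_eq_dividend of_nat_le_iff of_nat_mult)
    then have "real (n div d) * f d \<le> real n / real d * f d"
      using \<open>d \<ge> 1\<close> by (intro mult_right_mono nonneg) (simp_all add: field_simps)
    moreover have "f n \<le> real (n div d) * f d + f (n mod d)"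
      using subadditive_le_multiple[of f, OF subadd, of "n div d" d "n mod d"] by simp
    moreover have "f (n mod d) \<le> B"
      using B \<open>d \<ge> 1\<close> by simp
    ultimately have "f n / real n \<le> f d / real d + B / real n"
      using n_pos by (simp add: field_simps)
    moreover have "B / real n < \<epsilon>"
      using \<open>real n > B / \<epsilon>\<close> \<open>\<epsilon> > 0\<close> \<open>0 \<le> B\<close> n_pos by (simp add: field_simps)
    ultimately show ?case by linarith
  qed
qed

lemma fekete_subadditive:
  fixes f :: "nat \<Rightarrow> real"
  assumes nonneg: "\<And>n. 0 \<le> f n" and subadd: "\<And>a b. f (a + b) \<le> f a + f b"
  shows "(\<lambda>n. f n / real n) \<longlonglongrightarrow> Inf ((\<lambda>n. f n / real n) ` {1..})"
proof (rule order_tendstoI)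
  let ?Q = "(\<lambda>n. f n / real n) ` {1..}"
  have bdd: "bdd_below ?Q"
    using nonneg by (intro bdd_belowI[of _ 0]) auto
  fix y
  assume "y < Inf ?Q"
  then have lower: "y < f n / real n" if "n \<ge> 1" for n
    using cInf_lower[OF _ bdd, of "f n / real n"] that by fastforce
  show "\<forall>\<^sub>F n in sequentially. y < f n / real n"
    using eventually_ge_at_top[of 1] by (rule eventually_mono) (rule lower)
next
  let ?Q = "(\<lambda>n. f n / real n) ` {1..}"
  fix y
  assume "Inf ?Q < y"
  then obtain d where "d \<ge> 1" and d: "f d / real d < y"
    using cInf_lessD[of ?Q y] by auto
  show "\<forall>\<^sub>F n in sequentially. f n / real n < y"
    using subadditive_quotient_eventually_less[of f, OF nonneg subadd \<open>d \<ge> 1\<close>, of "y - f d / real d"] d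
    by simp
qed

lemma le_half_if_odd_multiples_le:
  fixes x A B :: real
  assumes "\<And>q::nat. x * (2 * real q + 1) \<le> real q * A + B"
  shows "x \<le> A / 2"
proof (rule ccontr)
  assume "\<not> x \<le> A / 2"
  then have t: "2 * x - A > 0" by simp
  obtain q :: nat where "real q > (B - x) / (2 * x - A)"
    using reals_Archimedean2 by blast
  then have "real q * (2 * x - A) > B - x"
    using t by (simp add: field_simps)
  with assms[of q] show False by (simp add: algebra_simps)
qed

section \<open>Products of commutators\<close>

definition is_comm_prod :: "('a, 'b) monoid_scheme \<Rightarrow> nat \<Rightarrow> 'a \<Rightarrow> bool" where
  "is_comm_prod G n z \<longleftrightarrow> (\<exists>ps. length ps = n \<and> (\<forall>(a, b) \<in> set ps. a \<in> carrier G \<and> b \<in> carrier G)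
                          \<and> z = comm_prod G ps)"

lemma cl_eq_Least: "cl G z = (LEAST n. is_comm_prod G n z)"
  unfolding cl_def is_comm_prod_def ..

lemma cl_le: "is_comm_prod G n z \<Longrightarrow> cl G z \<le> n"
  unfolding cl_eq_Least by (rule Least_le)

context group
begin

lemma mult_inv_cancel_left [simp]: "x \<in> carrier G \<Longrightarrow> z \<in> carrier G \<Longrightarrow> x \<otimes> (inv x \<otimes> z) = z"
  by (simp add: m_assoc[symmetric])

lemma inv_mult_cancel_left [simp]: "x \<in> carrier G \<Longrightarrow> z \<in> carrier G \<Longrightarrow> inv x \<otimes> (x \<otimes> z) = z"
  by (simp add: m_assoc[symmetric])

lemmas group_simps = m_assoc inv_mult_group

lemma commutator_closed [simp]:
  "a \<in> carrier G \<Longrightarrow> b \<in> carrier G \<Longrightarrow> commutator G a b \<in> carrier G"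
  by (simp add: commutator_def)

lemma commutator_conj:
  "\<lbrakk>a \<in> carrier G; b \<in> carrier G; c \<in> carrier G\<rbrakk> \<Longrightarrow>
   c \<otimes> commutator G a b \<otimes> inv c = commutator G (c \<otimes> a \<otimes> inv c) (c \<otimes> b \<otimes> inv c)"
  by (simp add: commutator_def group_simps)

lemma inv_commutator:
  "a \<in> carrier G \<Longrightarrow> b \<in> carrier G \<Longrightarrow> inv (commutator G a b) = commutator G b a"
  by (simp add: commutator_def group_simps)

lemma comm_prod_Nil [simp]: "comm_prod G [] = \<one>"
  by (simp add: comm_prod_def)

lemma comm_prod_Cons [simp]: "comm_prod G ((a, b) # ps) = commutator G a b \<otimes> comm_prod G ps"
  by (simp add: comm_prod_def)

lemma comm_prod_closed:
  "\<forall>(a, b) \<in> set ps. a \<in> carrier G \<and> b \<in> carrier G \<Longrightarrow> comm_prod G ps \<in> carrier G"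
  by (induction ps) auto

lemma comm_prod_append:
  "\<lbrakk>\<forall>(a, b) \<in> set ps. a \<in> carrier G \<and> b \<in> carrier G; \<forall>(a, b) \<in> set qs. a \<in> carrier G \<and> b \<in> carrier G\<rbrakk>
   \<Longrightarrow> comm_prod G (ps @ qs) = comm_prod G ps \<otimes> comm_prod G qs"
  by (induction ps) (auto simp: m_assoc comm_prod_closed)

lemma comm_prod_conj:
  assumes "\<forall>(a, b) \<in> set ps. a \<in> carrier G \<and> b \<in> carrier G" and c: "c \<in> carrier G"
  shows "c \<otimes> comm_prod G ps \<otimes> inv c
           = comm_prod G (map (\<lambda>(a, b). (c \<otimes> a \<otimes> inv c, c \<otimes> b \<otimes> inv c)) ps)"
  using assms(1)
proof (induction ps)
  case Nil
  then show ?case using c by simp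
next
  case (Cons p ps)
  obtain a b where p: "p = (a, b)" by (cases p)
  with Cons.prems have "a \<in> carrier G" "b \<in> carrier G" "comm_prod G ps \<in> carrier G"
    by (auto intro: comm_prod_closed)
  then have "c \<otimes> comm_prod G (p # ps) \<otimes> inv c
               = (c \<otimes> commutator G a b \<otimes> inv c) \<otimes> (c \<otimes> comm_prod G ps \<otimes> inv c)"
    using c p by (simp add: group_simps)
  with Cons p c \<open>a \<in> carrier G\<close> \<open>b \<in> carrier G\<close> show ?case
    by (simp add: commutator_conj)
qed

lemma inv_comm_prod:
  assumes "\<forall>(a, b) \<in> set ps. a \<in> carrier G \<and> b \<in> carrier G"
  shows "inv (comm_prod G ps) = comm_prod G (rev (map (\<lambda>(a, b). (b, a)) ps))"
  using assms
proof (induction ps)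
  case Nil
  then show ?case by simp
next
  case (Cons p ps)
  obtain a b where p: "p = (a, b)" by (cases p)
  with Cons.prems have ab: "a \<in> carrier G" "b \<in> carrier G"
    and ps: "\<forall>(a, b) \<in> set ps. a \<in> carrier G \<and> b \<in> carrier G" by auto
  have "inv (comm_prod G (p # ps)) = inv (comm_prod G ps) \<otimes> comm_prod G [(b, a)]"
    using ab p comm_prod_closed[OF ps] by (simp add: inv_mult_group inv_commutator)
  also have "\<dots> = comm_prod G (rev (map (\<lambda>(a, b). (b, a)) ps) @ [(b, a)])"
    using Cons.IH[OF ps] ab ps by (subst comm_prod_append) auto
  finally show ?case using p by simp
qed

lemma is_comm_prod_closed: "is_comm_prod G n z \<Longrightarrow> z \<in> carrier G"
  unfolding is_comm_prod_def using comm_prod_closed by blast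

lemma is_comm_prod_one: "is_comm_prod G 0 \<one>"
  unfolding is_comm_prod_def by auto

lemma is_comm_prod_commutator:
  "a \<in> carrier G \<Longrightarrow> b \<in> carrier G \<Longrightarrow> is_comm_prod G 1 (commutator G a b)"
  unfolding is_comm_prod_def by (intro exI[of _ "[(a, b)]"]) auto

lemma is_comm_prod_mult:
  assumes "is_comm_prod G n x" and "is_comm_prod G m y"
  shows "is_comm_prod G (n + m) (x \<otimes> y)"
proof -
  obtain ps qs where
    "length ps = n" "\<forall>(a, b) \<in> set ps. a \<in> carrier G \<and> b \<in> carrier G" "x = comm_prod G ps"
    "length qs = m" "\<forall>(a, b) \<in> set qs. a \<in> carrier G \<and> b \<in> carrier G" "y = comm_prod G qs"
    using assms unfolding is_comm_prod_def by blast
  then show ?thesis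
    unfolding is_comm_prod_def by (intro exI[of _ "ps @ qs"]) (auto simp: comm_prod_append)
qed

lemma is_comm_prod_conj:
  assumes "is_comm_prod G n x" and c: "c \<in> carrier G"
  shows "is_comm_prod G n (c \<otimes> x \<otimes> inv c)"
proof -
  obtain ps where
    "length ps = n" "\<forall>(a, b) \<in> set ps. a \<in> carrier G \<and> b \<in> carrier G" "x = comm_prod G ps"
    using assms unfolding is_comm_prod_def by blast
  then show ?thesis
    unfolding is_comm_prod_def using c
    by (intro exI[of _ "map (\<lambda>(a, b). (c \<otimes> a \<otimes> inv c, c \<otimes> b \<otimes> inv c)) ps"])
      (auto simp: comm_prod_conj)
qed

lemma is_comm_prod_inv:
  assumes "is_comm_prod G n x"
  shows "is_comm_prod G n (inv x)"
proof -
  obtain ps where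
    "length ps = n" "\<forall>(a, b) \<in> set ps. a \<in> carrier G \<and> b \<in> carrier G" "x = comm_prod G ps"
    using assms unfolding is_comm_prod_def by blast
  then show ?thesis
    unfolding is_comm_prod_def
    by (intro exI[of _ "rev (map (\<lambda>(a, b). (b, a)) ps)"]) (auto simp: inv_comm_prod)
qed

lemma is_comm_prod_inv_iff: "x \<in> carrier G \<Longrightarrow> is_comm_prod G n (inv x) \<longleftrightarrow> is_comm_prod G n x"
  using is_comm_prod_inv[of n "inv x"] is_comm_prod_inv[of n x] by auto

lemma is_comm_prod_conj_cancel:
  assumes "d \<in> carrier G" "x \<in> carrier G" "is_comm_prod G n (d \<otimes> x \<otimes> inv d \<otimes> y)"
    and "is_comm_prod G m y"
  shows "is_comm_prod G (n + m) x"
proof -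
  have "y \<in> carrier G" using assms(4) by (rule is_comm_prod_closed)
  then have "x = inv d \<otimes> ((d \<otimes> x \<otimes> inv d \<otimes> y) \<otimes> inv y) \<otimes> inv (inv d)"
    using assms(1,2) by (simp add: group_simps)
  moreover have "is_comm_prod G (n + m) (inv d \<otimes> ((d \<otimes> x \<otimes> inv d \<otimes> y) \<otimes> inv y) \<otimes> inv (inv d))"
    using assms(1,3,4) by (intro is_comm_prod_conj is_comm_prod_mult is_comm_prod_inv) auto
  ultimately show ?thesis by simp
qed

lemma derived_is_comm_prod:
  assumes "z \<in> derived G (carrier G)"
  shows "\<exists>n. is_comm_prod G n z"
  using assms unfolding derived_def
proof (induction rule: generate.induct)
  case one
  then show ?case using is_comm_prod_one by blast
next
  case (incl h)
  then show ?case using is_comm_prod_commutator unfolding commutator_def by blast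
next
  case (inv h)
  then show ?case using is_comm_prod_inv[OF is_comm_prod_commutator] unfolding commutator_def by blast
next
  case (eng h1 h2)
  then show ?case using is_comm_prod_mult by blast
qed

lemma is_comm_prod_cl:
  "z \<in> derived G (carrier G) \<Longrightarrow> is_comm_prod G (cl G z) z"
  unfolding cl_eq_Least by (rule LeastI_ex) (rule derived_is_comm_prod)

lemma cl_mult_le:
  "\<lbrakk>x \<in> derived G (carrier G); y \<in> derived G (carrier G)\<rbrakk> \<Longrightarrow> cl G (x \<otimes> y) \<le> cl G x + cl G y"
  by (intro cl_le is_comm_prod_mult is_comm_prod_cl)

lemma cl_inv: "x \<in> carrier G \<Longrightarrow> cl G (inv x) = cl G x"
  by (simp add: cl_eq_Least is_comm_prod_inv_iff)

lemma cl_int_pow: "x \<in> carrier G \<Longrightarrow> cl G (x [^] (i :: int)) = cl G (x [^] nat \<bar>i\<bar>)"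
proof (cases "i \<ge> 0")
  case True
  then show ?thesis by (metis abs_of_nonneg int_nat_eq int_pow_int)
next
  case False
  then have "i = - int (nat \<bar>i\<bar>)" by simp
  moreover assume "x \<in> carrier G"
  ultimately show ?thesis by (metis int_pow_neg_int cl_inv nat_pow_closed)
qed

section \<open>Odd powers of products of commutators\<close>

lemma conj_hom: "c \<in> carrier G \<Longrightarrow> (\<lambda>x. c \<otimes> x \<otimes> inv c) \<in> hom G G"
  by (rule homI) (simp_all add: group_simps)

lemma conj_nat_pow:
  "c \<in> carrier G \<Longrightarrow> x \<in> carrier G \<Longrightarrow> (c \<otimes> x \<otimes> inv c) [^] (n :: nat) = c \<otimes> x [^] n \<otimes> inv c"
  using hom_nat_pow[OF conj_hom _ is_group is_group] by simp

lemma conj_int_pow: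
  "c \<in> carrier G \<Longrightarrow> x \<in> carrier G \<Longrightarrow> (c \<otimes> x \<otimes> inv c) [^] (i :: int) = c \<otimes> x [^] i \<otimes> inv c"
  using hom_int_pow[OF conj_hom _ is_group is_group] by simp

text \<open>Moving all \<open>y\<close>'s of \<open>(x y)^(2q)\<close> to the left costs only one commutator per two factors.\<close>

lemma mult_pow_even:
  assumes x: "x \<in> carrier G" and y: "y \<in> carrier G"
  shows "\<exists>F. is_comm_prod G q F \<and> (x \<otimes> y) [^] (2 * q) = y [^] (2 * q) \<otimes> F \<otimes> x [^] (2 * q)"
proof (induction q)
  case 0
  then show ?case using is_comm_prod_one x y by (intro exI[of _ \<one>]) simp
next
  case (Suc q)
  then obtain F where F: "is_comm_prod G q F"
    and eq: "(x \<otimes> y) [^] (2 * q) = y [^] (2 * q) \<otimes> F \<otimes> x [^] (2 * q)" by blast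
  define Px where "Px = x [^] (2 * q)"
  define Py where "Py = y [^] (2 * q)"
  have XY: "Px \<in> carrier G" "Py \<in> carrier G" and "F \<in> carrier G"
    using x y is_comm_prod_closed[OF F] by (auto simp: Px_def Py_def)
  define F' where "F' = (inv (y \<otimes> y) \<otimes> F \<otimes> inv (inv (y \<otimes> y))) \<otimes>
     (inv y \<otimes> commutator G (inv y \<otimes> (Px \<otimes> x)) (y \<otimes> x \<otimes> y) \<otimes> inv (inv y))"
  have "is_comm_prod G (q + 1) F'"
    unfolding F'_def using F x y XY
    by (intro is_comm_prod_mult is_comm_prod_conj is_comm_prod_commutator) auto
  moreover have "x [^] (2 * Suc q) = x \<otimes> (Px \<otimes> x)"
    using x unfolding Px_def by (metis mult_2 add_Suc add_Suc_right nat_pow_Suc nat_pow_Suc2)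
  moreover have "y [^] (2 * Suc q) = Py \<otimes> (y \<otimes> y)"
    using y by (simp add: Py_def m_assoc)
  moreover have "(x \<otimes> y) [^] (2 * Suc q) = (x \<otimes> y) [^] (2 * q) \<otimes> (x \<otimes> y) \<otimes> (x \<otimes> y)"
    by simp
  ultimately show ?case
    unfolding eq Px_def[symmetric] Py_def[symmetric]
    using x y XY \<open>F \<in> carrier G\<close>
    by (intro exI[of _ F']) (simp add: F'_def commutator_def group_simps)
qed

lemma mult_pow_odd:
  assumes x: "x \<in> carrier G" and y: "y \<in> carrier G"
  shows "\<exists>C. is_comm_prod G q C \<and>
    (x \<otimes> y) [^] Suc (2 * q) = (x \<otimes> y [^] Suc (2 * q) \<otimes> inv x) \<otimes> (x [^] Suc (2 * q) \<otimes> C)"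
proof -
  obtain F where F: "is_comm_prod G q F"
    and eq: "(x \<otimes> y) [^] (2 * q) = y [^] (2 * q) \<otimes> F \<otimes> x [^] (2 * q)"
    using mult_pow_even[OF x y] by blast
  define Px where "Px = x [^] (2 * q)"
  have Px: "Px \<in> carrier G" and "F \<in> carrier G"
    using x is_comm_prod_closed[OF F] by (auto simp: Px_def)
  have "is_comm_prod G q (inv Px \<otimes> F \<otimes> inv (inv Px))"
    using F Px by (intro is_comm_prod_conj) auto
  moreover have "(x \<otimes> y) [^] Suc (2 * q)
      = (x \<otimes> y [^] Suc (2 * q) \<otimes> inv x) \<otimes> (x [^] Suc (2 * q) \<otimes> (inv Px \<otimes> F \<otimes> inv (inv Px)))"
    unfolding nat_pow_Suc2[OF x] nat_pow_Suc2[OF y] nat_pow_Suc2[OF m_closed[OF x y]] eq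
      Px_def[symmetric]
    using x y Px \<open>F \<in> carrier G\<close> by (simp add: group_simps)
  ultimately show ?thesis by blast
qed

lemma commutator_pow_odd:
  assumes a: "a \<in> carrier G" and b: "b \<in> carrier G"
  shows "is_comm_prod G (Suc q) (commutator G a b [^] Suc (2 * q))"
proof -
  let ?y = "b \<otimes> inv a \<otimes> inv b"
  have y: "?y \<in> carrier G" using a b by simp
  obtain C where C: "is_comm_prod G q C"
    and eq: "(a \<otimes> ?y) [^] Suc (2 * q) = (a \<otimes> ?y [^] Suc (2 * q) \<otimes> inv a) \<otimes> (a [^] Suc (2 * q) \<otimes> C)"
    using mult_pow_odd[OF a y] by blast
  have "C \<in> carrier G" using is_comm_prod_closed[OF C] .
  have comm: "commutator G a b = a \<otimes> ?y"
    by (simp add: commutator_def a b m_assoc)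
  have "?y [^] Suc (2 * q) = b \<otimes> inv a [^] Suc (2 * q) \<otimes> inv b"
    using a b by (intro conj_nat_pow) auto
  then have y_pow: "?y [^] Suc (2 * q) = b \<otimes> inv (a [^] Suc (2 * q)) \<otimes> inv b"
    using a by (simp only: nat_pow_inv)
  have "commutator G a b [^] Suc (2 * q)
      = (a \<otimes> ?y [^] Suc (2 * q) \<otimes> inv a) \<otimes> (a [^] Suc (2 * q) \<otimes> C)"
    unfolding comm by (rule eq)
  also have "\<dots> = commutator G (a \<otimes> b) (inv (a [^] Suc (2 * q))) \<otimes> C"
    unfolding y_pow using a b \<open>C \<in> carrier G\<close> by (simp add: commutator_def group_simps)
  finally have "commutator G a b [^] Suc (2 * q) = commutator G (a \<otimes> b) (inv (a [^] Suc (2 * q))) \<otimes> C" .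
  moreover have "is_comm_prod G (1 + q) (commutator G (a \<otimes> b) (inv (a [^] Suc (2 * q))) \<otimes> C)"
    using a b C by (intro is_comm_prod_mult is_comm_prod_commutator) auto
  ultimately show ?thesis by simp
qed

lemma comm_prod_pow_odd:
  assumes "ps \<noteq> []" and "\<forall>(a, b) \<in> set ps. a \<in> carrier G \<and> b \<in> carrier G"
  shows "is_comm_prod G (length ps + q * (2 * length ps - 1)) (comm_prod G ps [^] Suc (2 * q))"
  using assms
proof (induction ps rule: list_nonempty_induct)
  case (single p)
  then show ?case using commutator_pow_odd by (cases p) auto
next
  case (cons p ps)
  obtain a b where p: "p = (a, b)" by (cases p)
  with cons.prems have ab: "a \<in> carrier G" "b \<in> carrier G"
    and ps: "\<forall>(a, b) \<in> set ps. a \<in> carrier G \<and> b \<in> carrier G" by auto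
  let ?x = "commutator G a b"
  obtain C where C: "is_comm_prod G q C"
    and eq: "(?x \<otimes> comm_prod G ps) [^] Suc (2 * q) =
      (?x \<otimes> comm_prod G ps [^] Suc (2 * q) \<otimes> inv ?x) \<otimes> (?x [^] Suc (2 * q) \<otimes> C)"
    using mult_pow_odd[of ?x "comm_prod G ps"] ab comm_prod_closed[OF ps] by auto
  have "is_comm_prod G ((length ps + q * (2 * length ps - 1)) + (Suc q + q))
         (comm_prod G (p # ps) [^] Suc (2 * q))"
    unfolding p comm_prod_Cons eq using cons.IH[OF ps] C ab
    by (intro is_comm_prod_mult is_comm_prod_conj commutator_pow_odd) auto
  moreover have "length ps + q * (2 * length ps - 1) + (Suc q + q)
      = length (p # ps) + q * (2 * length (p # ps) - 1)"
    using cons.hyps by (cases "length ps") (auto simp: algebra_simps)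
  ultimately show ?case by (simp only:)
qed

end

section \<open>Products of conjugates of powers\<close>

definition conj_pow_prod :: "('a, 'b) monoid_scheme \<Rightarrow> 'a \<Rightarrow> ('a \<times> int) list \<Rightarrow> 'a" where
  "conj_pow_prod G g cks = foldr (\<lambda>(c, k) acc. c \<otimes>\<^bsub>G\<^esub> g [^]\<^bsub>G\<^esub> k \<otimes>\<^bsub>G\<^esub> inv\<^bsub>G\<^esub> c \<otimes>\<^bsub>G\<^esub> acc) cks \<one>\<^bsub>G\<^esub>"

definition is_conj_pow_prod :: "('a, 'b) monoid_scheme \<Rightarrow> 'a \<Rightarrow> nat \<Rightarrow> int \<Rightarrow> 'a \<Rightarrow> bool" where
  "is_conj_pow_prod G g r S z \<longleftrightarrow> (\<exists>cks. length cks = r \<and> (\<forall>(c, k) \<in> set cks. c \<in> carrier G)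
     \<and> sum_list (map snd cks) = S \<and> z = conj_pow_prod G g cks)"

context group
begin

lemma conj_pow_prod_Nil [simp]: "conj_pow_prod G g [] = \<one>"
  by (simp add: conj_pow_prod_def)

lemma conj_pow_prod_Cons [simp]:
  "conj_pow_prod G g ((c, k) # cks) = c \<otimes> g [^] k \<otimes> inv c \<otimes> conj_pow_prod G g cks"
  by (simp add: conj_pow_prod_def)

lemma conj_pow_prod_closed:
  "g \<in> carrier G \<Longrightarrow> \<forall>(c, k) \<in> set cks. c \<in> carrier G \<Longrightarrow> conj_pow_prod G g cks \<in> carrier G"
  by (induction cks) auto

lemma conj_pow_prod_append:
  "\<lbrakk>g \<in> carrier G; \<forall>(c, k) \<in> set cks. c \<in> carrier G; \<forall>(c, k) \<in> set cks'. c \<in> carrier G\<rbrakk>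
   \<Longrightarrow> conj_pow_prod G g (cks @ cks') = conj_pow_prod G g cks \<otimes> conj_pow_prod G g cks'"
  by (induction cks) (auto simp: m_assoc conj_pow_prod_closed)

lemma conj_pow_prod_conj:
  assumes g: "g \<in> carrier G" and d: "d \<in> carrier G" and "\<forall>(c, k) \<in> set cks. c \<in> carrier G"
  shows "d \<otimes> conj_pow_prod G g cks \<otimes> inv d = conj_pow_prod G g (map (\<lambda>(c, k). (d \<otimes> c, k)) cks)"
  using assms(3)
proof (induction cks)
  case Nil
  then show ?case using d by simp
next
  case (Cons ck cks)
  obtain c k where ck: "ck = (c, k)" by (cases ck)
  with Cons.prems have "c \<in> carrier G" "conj_pow_prod G g cks \<in> carrier G"
    using g by (auto intro: conj_pow_prod_closed)
  then have "d \<otimes> conj_pow_prod G g (ck # cks) \<otimes> inv d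
      = (d \<otimes> c) \<otimes> g [^] k \<otimes> inv (d \<otimes> c) \<otimes> (d \<otimes> conj_pow_prod G g cks \<otimes> inv d)"
    using ck d g by (simp add: group_simps)
  with Cons ck show ?case by simp
qed

lemma is_conj_pow_prod_closed: "g \<in> carrier G \<Longrightarrow> is_conj_pow_prod G g r S z \<Longrightarrow> z \<in> carrier G"
  unfolding is_conj_pow_prod_def using conj_pow_prod_closed by blast

lemma is_conj_pow_prod_single:
  "g \<in> carrier G \<Longrightarrow> c \<in> carrier G \<Longrightarrow> is_conj_pow_prod G g 1 k (c \<otimes> g [^] k \<otimes> inv c)"
  unfolding is_conj_pow_prod_def by (intro exI[of _ "[(c, k)]"]) auto

lemma is_conj_pow_prod_mult:
  assumes g: "g \<in> carrier G" and "is_conj_pow_prod G g r S z" and "is_conj_pow_prod G g r' S' z'"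
  shows "is_conj_pow_prod G g (r + r') (S + S') (z \<otimes> z')"
proof -
  obtain cks cks' where
    "length cks = r" "\<forall>(c, k) \<in> set cks. c \<in> carrier G" "sum_list (map snd cks) = S"
    "z = conj_pow_prod G g cks"
    "length cks' = r'" "\<forall>(c, k) \<in> set cks'. c \<in> carrier G" "sum_list (map snd cks') = S'"
    "z' = conj_pow_prod G g cks'"
    using assms(2,3) unfolding is_conj_pow_prod_def by blast
  then show ?thesis
    unfolding is_conj_pow_prod_def using g
    by (intro exI[of _ "cks @ cks'"]) (auto simp: conj_pow_prod_append)
qed

lemma is_conj_pow_prod_conj:
  assumes g: "g \<in> carrier G" and "is_conj_pow_prod G g r S z" and d: "d \<in> carrier G"
  shows "is_conj_pow_prod G g r S (d \<otimes> z \<otimes> inv d)"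
proof -
  obtain cks where
    "length cks = r" "\<forall>(c, k) \<in> set cks. c \<in> carrier G" "sum_list (map snd cks) = S"
    "z = conj_pow_prod G g cks"
    using assms(2) unfolding is_conj_pow_prod_def by blast
  then show ?thesis
    unfolding is_conj_pow_prod_def using g d
    by (intro exI[of _ "map (\<lambda>(c, k). (d \<otimes> c, k)) cks"])
      (auto simp: conj_pow_prod_conj case_prod_beta comp_def)
qed

text \<open>Adjacent factors merge at the cost of one commutator:
  \<open>c g^k c\<inverse> \<cdot> d g^S d\<inverse> = c g^(k+S) c\<inverse> \<cdot> c [g^(-S), c\<inverse> d] c\<inverse>\<close>.\<close>

lemma conj_pow_prod_merge:
  assumes g: "g \<in> carrier G" and "cks \<noteq> []" and "\<forall>(c, k) \<in> set cks. c \<in> carrier G"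
  shows "\<exists>d C. d \<in> carrier G \<and> is_comm_prod G (length cks - 1) C \<and>
    conj_pow_prod G g cks = d \<otimes> g [^] sum_list (map snd cks) \<otimes> inv d \<otimes> C"
  using assms(2,3)
proof (induction cks rule: list_nonempty_induct)
  case (single ck)
  obtain c k where "ck = (c, k)" by (cases ck)
  with single g show ?case using is_comm_prod_one by (intro exI[of _ c] exI[of _ \<one>]) auto
next
  case (cons ck cks)
  obtain c k where ck: "ck = (c, k)" by (cases ck)
  with cons.prems have c: "c \<in> carrier G" and cks: "\<forall>(c, k) \<in> set cks. c \<in> carrier G" by auto
  define S where "S = sum_list (map snd cks)"
  obtain d C where d: "d \<in> carrier G" and C: "is_comm_prod G (length cks - 1) C"
    and eq: "conj_pow_prod G g cks = d \<otimes> g [^] S \<otimes> inv d \<otimes> C"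
    using cons.IH[OF cks] unfolding S_def by blast
  let ?C' = "(c \<otimes> commutator G (inv (g [^] S)) (inv c \<otimes> d) \<otimes> inv c) \<otimes> C"
  have "C \<in> carrier G" using is_comm_prod_closed[OF C] .
  then have "conj_pow_prod G g (ck # cks) = c \<otimes> (g [^] k \<otimes> g [^] S) \<otimes> inv c \<otimes> ?C'"
    using ck eq c d g by (simp add: commutator_def group_simps)
  also have "g [^] k \<otimes> g [^] S = g [^] sum_list (map snd (ck # cks))"
    using int_pow_mult[OF g] ck S_def by simp
  finally have "conj_pow_prod G g (ck # cks) = c \<otimes> g [^] sum_list (map snd (ck # cks)) \<otimes> inv c \<otimes> ?C'" .
  moreover have "is_comm_prod G (1 + (length cks - 1)) ?C'"
    using C c d g by (intro is_comm_prod_mult is_comm_prod_conj is_comm_prod_commutator) auto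
  ultimately show ?case
    using c cons.hyps by (intro exI[of _ c] exI[of _ ?C']) auto
qed

lemma is_conj_pow_prod_merge:
  assumes "g \<in> carrier G" and "is_conj_pow_prod G g r S z" and "r \<ge> 1"
  shows "\<exists>d C. d \<in> carrier G \<and> is_comm_prod G (r - 1) C \<and> z = d \<otimes> g [^] S \<otimes> inv d \<otimes> C"
proof -
  obtain cks where "length cks = r" "\<forall>(c, k) \<in> set cks. c \<in> carrier G"
    "sum_list (map snd cks) = S" "z = conj_pow_prod G g cks"
    using assms(2) unfolding is_conj_pow_prod_def by blast
  moreover from this have "cks \<noteq> []" using assms(3) by auto
  ultimately show ?thesis using conj_pow_prod_merge[OF assms(1)] by blast
qed

lemma conj_pow_prod_mem_normal:
  assumes "H \<lhd> G" and "g \<in> H" and "\<forall>(c, k) \<in> set cks. c \<in> carrier G"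
  shows "conj_pow_prod G g cks \<in> H"
  using assms(3)
proof (induction cks)
  case Nil
  then show ?case using assms(1) by (simp add: normal_def subgroup.one_closed)
next
  case (Cons ck cks)
  have H: "subgroup H G" using assms(1) by (rule normal_imp_subgroup)
  obtain c k where ck: "ck = (c, k)" by (cases ck)
  with Cons.prems have "c \<otimes> g [^] k \<otimes> inv c \<in> H"
    using normal.inv_op_closed2[OF assms(1)] subgroup_int_pow_closed[OF H assms(2)] by auto
  with Cons ck show ?case by (auto intro: subgroup.m_closed[OF H])
qed

lemma pow_prod_conjugates:
  assumes "\<forall>x \<in> set gs. f x \<in> carrier G \<and> x = f x \<otimes> g \<otimes> inv (f x)"
    and "length gs = length ns" and "g \<in> carrier G"
  shows "pow_prod G (zip gs ns) = conj_pow_prod G g (zip (map f gs) ns)"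
  using assms
proof (induction gs arbitrary: ns)
  case Nil
  then show ?case by (simp add: pow_prod_def)
next
  case (Cons x gs)
  then obtain n ns' where ns: "ns = n # ns'" by (cases ns) auto
  have "x [^] n = f x \<otimes> g [^] n \<otimes> inv (f x)"
    using Cons.prems conj_int_pow[of "f x" g n] by auto
  with Cons ns show ?case by (simp add: pow_prod_def)
qed

lemma conj_int_pow_nat_pow:
  assumes c: "c \<in> carrier G" and g: "g \<in> carrier G"
  shows "(c \<otimes> g [^] (k :: int) \<otimes> inv c) [^] (n :: nat) = c \<otimes> g [^] (int n * k) \<otimes> inv c"
proof -
  have "(c \<otimes> g [^] k \<otimes> inv c) [^] n = c \<otimes> (g [^] k) [^] n \<otimes> inv c"
    using c g by (intro conj_nat_pow) auto
  also have "(g [^] k) [^] n = g [^] (int n * k)"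
    using int_pow_pow[OF g, of k "int n"] by (simp add: int_pow_int mult.commute)
  finally show ?thesis .
qed

lemma conj_pow_prod_pow_odd:
  assumes g: "g \<in> carrier G" and "cks \<noteq> []" and "\<forall>(c, k) \<in> set cks. c \<in> carrier G"
  shows "\<exists>z C. is_conj_pow_prod G g (length cks) (int (Suc (2 * q)) * sum_list (map snd cks)) z
    \<and> is_comm_prod G (q * (length cks - 1)) C \<and> conj_pow_prod G g cks [^] Suc (2 * q) = z \<otimes> C"
  using assms(2,3)
proof (induction cks rule: list_nonempty_induct)
  case (single ck)
  obtain c k where ck: "ck = (c, k)" by (cases ck)
  with single have c: "c \<in> carrier G" by auto
  let ?z = "c \<otimes> g [^] (int (Suc (2 * q)) * k) \<otimes> inv c"
  have "conj_pow_prod G g [ck] = c \<otimes> g [^] k \<otimes> inv c"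
    using ck c g by simp
  then have "conj_pow_prod G g [ck] [^] Suc (2 * q) = ?z \<otimes> \<one>"
    using c g by (simp only: conj_int_pow_nat_pow[OF c g]) simp
  moreover have "is_conj_pow_prod G g (length [ck]) (int (Suc (2 * q)) * sum_list (map snd [ck])) ?z"
    using ck is_conj_pow_prod_single[OF g c] by simp
  moreover have "is_comm_prod G (q * (length [ck] - 1)) \<one>"
    by (simp add: is_comm_prod_one)
  ultimately show ?case by blast
next
  case (cons ck cks)
  define P where "P = Suc (2 * q)"
  obtain c k where ck: "ck = (c, k)" by (cases ck)
  with cons.prems have c: "c \<in> carrier G" and cks: "\<forall>(c, k) \<in> set cks. c \<in> carrier G" by auto
  define y where "y = c \<otimes> g [^] k \<otimes> inv c"
  define r where "r = conj_pow_prod G g cks"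
  have y: "y \<in> carrier G" and r: "r \<in> carrier G"
    using c g cks conj_pow_prod_closed by (auto simp: y_def r_def)
  obtain z C where z: "is_conj_pow_prod G g (length cks) (int P * sum_list (map snd cks)) z"
    and C: "is_comm_prod G (q * (length cks - 1)) C" and r_pow: "r [^] P = z \<otimes> C"
    using cons.IH[OF cks] unfolding r_def P_def by blast
  obtain C' where C': "is_comm_prod G q C'"
    and yr_pow: "(y \<otimes> r) [^] P = (y \<otimes> r [^] P \<otimes> inv y) \<otimes> (y [^] P \<otimes> C')"
    using mult_pow_odd[OF y r] unfolding P_def by blast
  have y_pow: "y [^] P = c \<otimes> g [^] (int P * k) \<otimes> inv c"
    using c g unfolding y_def by (rule conj_int_pow_nat_pow)
  have carrier: "z \<in> carrier G" "C \<in> carrier G" "C' \<in> carrier G" "y [^] P \<in> carrier G"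
    using is_conj_pow_prod_closed[OF g z] is_comm_prod_closed[OF C] is_comm_prod_closed[OF C'] y
    by auto
  let ?z = "(y \<otimes> z \<otimes> inv y) \<otimes> y [^] P"
  let ?C = "(inv (y [^] P) \<otimes> (y \<otimes> C \<otimes> inv y) \<otimes> inv (inv (y [^] P))) \<otimes> C'"
  have "conj_pow_prod G g (ck # cks) = y \<otimes> r"
    using ck by (simp add: y_def r_def)
  then have "conj_pow_prod G g (ck # cks) [^] P = (y \<otimes> (z \<otimes> C) \<otimes> inv y) \<otimes> (y [^] P \<otimes> C')"
    using yr_pow by (simp only: r_pow)
  also have "\<dots> = ?z \<otimes> ?C"
    using y carrier by (simp add: group_simps)
  finally have "conj_pow_prod G g (ck # cks) [^] P = ?z \<otimes> ?C" .
  moreover have "is_conj_pow_prod G g (length cks + 1) (int P * sum_list (map snd cks) + int P * k) ?z"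
    unfolding y_pow using g c y z
    by (intro is_conj_pow_prod_mult is_conj_pow_prod_conj is_conj_pow_prod_single)
  moreover have "is_comm_prod G (q * (length cks - 1) + q) ?C"
    using C C' y carrier by (intro is_comm_prod_mult is_comm_prod_conj) auto
  moreover have "length cks + 1 = length (ck # cks)"
    and "int P * sum_list (map snd cks) + int P * k = int P * sum_list (map snd (ck # cks))"
    using ck by (auto simp: algebra_simps)
  moreover have "q * (length cks - 1) + q = q * (length (ck # cks) - 1)"
    using cons.hyps by (cases "length cks") (auto simp: algebra_simps)
  ultimately show ?case
    unfolding P_def[symmetric] by metis
qed

lemma pow_odd_is_comm_prod_nontrivial:
  assumes g: "g \<in> carrier G" and cks: "cks \<noteq> []" "\<forall>(c, k) \<in> set cks. c \<in> carrier G"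
    and h: "is_comm_prod G k (conj_pow_prod G g cks)" and "k \<ge> 1"
  shows "is_comm_prod G (q * (2 * k + length cks - 2) + (k + length cks - 1))
           (g [^] (int (Suc (2 * q)) * sum_list (map snd cks)))"
proof -
  define m where "m = length cks"
  define P where "P = Suc (2 * q)"
  define N where "N = sum_list (map snd cks)"
  have "m \<ge> 1" using cks(1) by (simp add: m_def Suc_leI)
  obtain ps where "length ps = k" "\<forall>(a, b) \<in> set ps. a \<in> carrier G \<and> b \<in> carrier G"
    and "conj_pow_prod G g cks = comm_prod G ps"
    using h unfolding is_comm_prod_def by blast
  moreover have "ps \<noteq> []" using \<open>k \<ge> 1\<close> \<open>length ps = k\<close> by auto
  ultimately have h_pow: "is_comm_prod G (k + q * (2 * k - 1)) (conj_pow_prod G g cks [^] P)"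
    unfolding P_def using comm_prod_pow_odd by metis
  obtain z C where z: "is_conj_pow_prod G g m (int P * N) z"
    and C: "is_comm_prod G (q * (m - 1)) C" and eq: "conj_pow_prod G g cks [^] P = z \<otimes> C"
    using conj_pow_prod_pow_odd[OF g cks] unfolding m_def P_def N_def by blast
  have "z \<in> carrier G" "C \<in> carrier G"
    using is_conj_pow_prod_closed[OF g z] is_comm_prod_closed[OF C] by auto
  then have "z = conj_pow_prod G g cks [^] P \<otimes> inv C"
    unfolding eq by (simp add: m_assoc)
  then have z_comm: "is_comm_prod G (k + q * (2 * k - 1) + q * (m - 1)) z"
    using is_comm_prod_mult[OF h_pow is_comm_prod_inv[OF C]] by simp
  obtain d C' where d: "d \<in> carrier G" and C': "is_comm_prod G (m - 1) C'"
    and z_eq: "z = d \<otimes> g [^] (int P * N) \<otimes> inv d \<otimes> C'"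
    using is_conj_pow_prod_merge[OF g z \<open>m \<ge> 1\<close>] by blast
  have "is_comm_prod G (k + q * (2 * k - 1) + q * (m - 1) + (m - 1)) (g [^] (int P * N))"
    using is_comm_prod_conj_cancel[OF d _ z_comm[unfolded z_eq] C'] g by simp
  moreover have "k + q * (2 * k - 1) + q * (m - 1) + (m - 1) = q * (2 * k + m - 2) + (k + m - 1)"
    using \<open>k \<ge> 1\<close> \<open>m \<ge> 1\<close> by (cases k; cases m) (simp_all add: algebra_simps)
  ultimately show ?thesis
    unfolding m_def P_def N_def by simp
qed

text \<open>If the product is trivial, its first factor is the inverse of the product of the others,
  so only the other \<open>m - 1\<close> factors need to be raised to the odd power.\<close>

lemma pow_odd_is_comm_prod_trivial:
  assumes g: "g \<in> carrier G" and "length cks \<ge> 2" and carr: "\<forall>(c, k) \<in> set cks. c \<in> carrier G"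
    and triv: "conj_pow_prod G g cks = \<one>"
  shows "is_comm_prod G (q * (length cks - 2) + (length cks - 1))
           (g [^] (int (Suc (2 * q)) * sum_list (map snd cks)))"
proof -
  define P where "P = Suc (2 * q)"
  obtain c k rest where cks: "cks = (c, k) # rest" and "rest \<noteq> []"
    using \<open>length cks \<ge> 2\<close> by (cases cks; cases "tl cks") auto
  with carr have c: "c \<in> carrier G" and rest: "\<forall>(c, k) \<in> set rest. c \<in> carrier G" by auto
  define y where "y = c \<otimes> g [^] k \<otimes> inv c"
  define r where "r = conj_pow_prod G g rest"
  have y: "y \<in> carrier G" and r: "r \<in> carrier G"
    using c g rest conj_pow_prod_closed by (auto simp: y_def r_def)
  have "y \<otimes> r = \<one>" using triv cks by (simp add: y_def r_def)
  then have y_eq: "inv r = y" using inv_equality y r by blast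
  obtain z C where z: "is_conj_pow_prod G g (length rest) (int P * sum_list (map snd rest)) z"
    and C: "is_comm_prod G (q * (length rest - 1)) C" and r_pow: "r [^] P = z \<otimes> C"
    using conj_pow_prod_pow_odd[OF g \<open>rest \<noteq> []\<close> rest] unfolding r_def P_def by blast
  have "z \<in> carrier G" "C \<in> carrier G"
    using is_conj_pow_prod_closed[OF g z] is_comm_prod_closed[OF C] by auto
  have "y [^] P \<otimes> z = inv C"
    using nat_pow_inv[OF r, of P] r_pow y_eq \<open>z \<in> carrier G\<close> \<open>C \<in> carrier G\<close>
    by (simp add: group_simps)
  then have W_comm: "is_comm_prod G (q * (length rest - 1)) (y [^] P \<otimes> z)"
    using is_comm_prod_inv[OF C] by simp
  have "is_conj_pow_prod G g (1 + length rest) (int P * k + int P * sum_list (map snd rest)) (y [^] P \<otimes> z)"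
    unfolding y_def conj_int_pow_nat_pow[OF c g]
    by (rule is_conj_pow_prod_mult[OF g is_conj_pow_prod_single[OF g c] z])
  then have "is_conj_pow_prod G g (length cks) (int P * sum_list (map snd cks)) (y [^] P \<otimes> z)"
    using cks by (simp add: algebra_simps)
  then obtain d C' where d: "d \<in> carrier G" and C': "is_comm_prod G (length cks - 1) C'"
    and W_eq: "y [^] P \<otimes> z = d \<otimes> g [^] (int P * sum_list (map snd cks)) \<otimes> inv d \<otimes> C'"
    using is_conj_pow_prod_merge[OF g] \<open>length cks \<ge> 2\<close> by (metis Suc_1 Suc_leD)
  have "is_comm_prod G (q * (length rest - 1) + (length cks - 1))
          (g [^] (int P * sum_list (map snd cks)))"
    using is_comm_prod_conj_cancel[OF d _ W_comm[unfolded W_eq] C'] g by simp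
  then show ?thesis
    using cks unfolding P_def by simp
qed

section \<open>Stable commutator length\<close>

lemma scl_mult_le_cl_pow:
  assumes g: "g \<in> derived G (carrier G)"
  shows "scl G g * real n \<le> real (cl G (g [^] n))"
proof -
  have "subgroup (derived G (carrier G)) G" by (simp add: derived_is_subgroup)
  then have pow_derived: "g [^] n \<in> derived G (carrier G)" for n :: nat
    using subgroup_int_pow_closed[OF _ g, of "int n"] by (simp add: int_pow_int)
  have "g \<in> carrier G" using g derived_in_carrier by blast
  define f where "f n = real (cl G (g [^] n))" for n :: nat
  have "f (a + b) \<le> f a + f b" for a b
    using cl_mult_le[OF pow_derived[of a] pow_derived[of b]] nat_pow_mult[OF \<open>g \<in> carrier G\<close>, of a b]
    by (simp add: f_def)
  then have "(\<lambda>n. f n / real n) \<longlonglongrightarrow> Inf ((\<lambda>n. f n / real n) ` {1..})"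
    by (intro fekete_subadditive) (simp_all add: f_def)
  then have scl_eq: "scl G g = Inf ((\<lambda>n. f n / real n) ` {1..})"
    unfolding scl_def f_def by (rule limI)
  show ?thesis
  proof (cases "n = 0")
    case False
    have "bdd_below ((\<lambda>n. f n / real n) ` {1..})"
      by (intro bdd_belowI[of _ 0]) (auto simp: f_def)
    then have "scl G g \<le> f n / real n"
      unfolding scl_eq using False by (intro cInf_lower) auto
    then show ?thesis using False by (simp add: f_def field_simps)
  qed simp
qed

lemma pow_odd_is_comm_prod:
  assumes g: "g \<in> derived G (carrier G)" and cks: "cks \<noteq> []" "\<forall>(c, k) \<in> set cks. c \<in> carrier G"
    and nontriv: "\<not> (length cks = 1 \<and> conj_pow_prod G g cks = \<one>)"
  defines "k \<equiv> cl G (conj_pow_prod G g cks)" and "m \<equiv> length cks"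
  shows "2 * k + m \<ge> 2"
    and "is_comm_prod G (q * (2 * k + m - 2) + (k + m - 1))
           (g [^] (int (Suc (2 * q)) * sum_list (map snd cks)))"
proof -
  have g_carrier: "g \<in> carrier G" using g derived_in_carrier by blast
  have "m \<ge> 1" using cks(1) by (simp add: m_def Suc_leI)
  have "2 * k + m \<ge> 2 \<and> is_comm_prod G (q * (2 * k + m - 2) + (k + m - 1))
          (g [^] (int (Suc (2 * q)) * sum_list (map snd cks)))"
  proof (cases "conj_pow_prod G g cks = \<one>")
    case True
    then have "k = 0" using cl_le[OF is_comm_prod_one] by (simp add: k_def)
    moreover have "m \<ge> 2" using nontriv True \<open>m \<ge> 1\<close> by (simp add: m_def)
    ultimately show ?thesis
      using pow_odd_is_comm_prod_trivial[OF g_carrier _ cks(2) True] by (simp add: m_def)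
  next
    case False
    have "conj_pow_prod G g cks \<in> derived G (carrier G)"
      using conj_pow_prod_mem_normal[OF derived_self_is_normal g cks(2)] .
    then have k: "is_comm_prod G k (conj_pow_prod G g cks)"
      unfolding k_def by (rule is_comm_prod_cl)
    have "k \<noteq> 0"
    proof
      assume "k = 0"
      with k have "conj_pow_prod G g cks = \<one>" by (simp add: is_comm_prod_def)
      with False show False ..
    qed
    then show ?thesis
      using pow_odd_is_comm_prod_nontrivial[OF g_carrier cks k] \<open>m \<ge> 1\<close> by (simp add: m_def)
  qed
  then show "2 * k + m \<ge> 2"
    and "is_comm_prod G (q * (2 * k + m - 2) + (k + m - 1))
           (g [^] (int (Suc (2 * q)) * sum_list (map snd cks)))"
    by auto
qed

lemma scl_mult_sum_le_cl_conj_pow_prod: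
  assumes g: "g \<in> derived G (carrier G)" and cks: "cks \<noteq> []" "\<forall>(c, k) \<in> set cks. c \<in> carrier G"
    and nontriv: "\<not> (length cks = 1 \<and> conj_pow_prod G g cks = \<one>)"
  shows "scl G g * \<bar>real_of_int (sum_list (map snd cks))\<bar>
           \<le> real (cl G (conj_pow_prod G g cks)) + real (length cks) / 2 - 1"
proof -
  define k where "k = cl G (conj_pow_prod G g cks)"
  define m where "m = length cks"
  define N where "N = sum_list (map snd cks)"
  have "g \<in> carrier G" using g derived_in_carrier by blast
  have "2 * k + m \<ge> 2" and "m \<ge> 1"
    using pow_odd_is_comm_prod(1)[OF g cks nontriv] cks(1) by (simp_all add: k_def m_def Suc_leI)
  have "scl G g * \<bar>real_of_int N\<bar> * (2 * real q + 1)
          \<le> real q * (2 * real k + real m - 2) + (real k + real m - 1)" for q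
  proof -
    have "scl G g * \<bar>real_of_int N\<bar> * (2 * real q + 1) = scl G g * real (Suc (2 * q) * nat \<bar>N\<bar>)"
      by (simp add: algebra_simps)
    also have "\<dots> \<le> real (cl G (g [^] (Suc (2 * q) * nat \<bar>N\<bar>)))"
      by (rule scl_mult_le_cl_pow[OF g])
    also have "nat \<bar>int (Suc (2 * q)) * N\<bar> = Suc (2 * q) * nat \<bar>N\<bar>"
      by (simp only: nat_abs_mult_distrib abs_of_nat nat_int)
    then have "cl G (g [^] (Suc (2 * q) * nat \<bar>N\<bar>)) = cl G (g [^] (int (Suc (2 * q)) * N))"
      using cl_int_pow[OF \<open>g \<in> carrier G\<close>, of "int (Suc (2 * q)) * N"] by simp
    also have "\<dots> \<le> q * (2 * k + m - 2) + (k + m - 1)"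
      using cl_le[OF pow_odd_is_comm_prod(2)[OF g cks nontriv]] by (simp add: k_def m_def N_def)
    finally show ?thesis
      using \<open>2 * k + m \<ge> 2\<close> \<open>m \<ge> 1\<close> by (simp add: of_nat_diff)
  qed
  then have "scl G g * \<bar>real_of_int N\<bar> \<le> (2 * real k + real m - 2) / 2"
    by (rule le_half_if_odd_multiples_le)
  then show ?thesis by (simp add: k_def m_def N_def field_simps)
qed

end

theorem corollary2p2:
  fixes G :: "('a, 'b) monoid_scheme" and g :: 'a and gs :: "'a list" and ns :: "int list"
  assumes "group G"
    and "g \<in> derived G (carrier G)"
    and "length gs = length ns" and "length gs \<ge> 1"
    and "\<forall>x \<in> set gs. \<exists>c \<in> carrier G. x = c \<otimes>\<^bsub>G\<^esub> g \<otimes>\<^bsub>G\<^esub> inv\<^bsub>G\<^esub> c"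
    and "\<not> (length gs = 1 \<and> hd gs [^]\<^bsub>G\<^esub> hd ns = \<one>\<^bsub>G\<^esub>)"
  shows "real (cl G (pow_prod G (zip gs ns)))
           \<ge> scl G g * \<bar>real_of_int (sum_list ns)\<bar> - real (length gs) / 2 + 1"
proof -
  interpret group G by (rule assms(1))
  have g: "g \<in> carrier G" using assms(2) derived_in_carrier by blast
  obtain f where f: "\<forall>x \<in> set gs. f x \<in> carrier G \<and> x = f x \<otimes>\<^bsub>G\<^esub> g \<otimes>\<^bsub>G\<^esub> inv\<^bsub>G\<^esub> (f x)"
    using bchoice[of "set gs" "\<lambda>x c. c \<in> carrier G \<and> x = c \<otimes>\<^bsub>G\<^esub> g \<otimes>\<^bsub>G\<^esub> inv\<^bsub>G\<^esub> c"] assms(5)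
    by blast
  define cks where "cks = zip (map f gs) ns"
  have prod_eq: "pow_prod G (zip gs ns) = conj_pow_prod G g cks"
    unfolding cks_def by (rule pow_prod_conjugates[OF f assms(3) g])
  have "set gs \<subseteq> carrier G"
    using f g by (metis inv_closed m_closed subsetI)
  have "cks \<noteq> []" and "length cks = length gs" and "sum_list (map snd cks) = sum_list ns"
    using assms(3,4) by (auto simp: cks_def)
  moreover have "\<forall>(c, k) \<in> set cks. c \<in> carrier G"
    using f by (auto simp: cks_def dest!: set_zip_leftD)
  moreover have "\<not> (length cks = 1 \<and> conj_pow_prod G g cks = \<one>\<^bsub>G\<^esub>)"
    using assms(3,6) prod_eq \<open>length cks = length gs\<close> \<open>set gs \<subseteq> carrier G\<close>
    by (auto simp: pow_prod_def length_Suc_conv)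
  ultimately show ?thesis
    using scl_mult_sum_le_cl_conj_pow_prod[OF assms(2)] prod_eq by fastforce
qed

end
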